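(* For all integers $n,m\ge 3$, $\gamma_t(C_n\times C_m)\le\gamma_t(C_{n+1}\times C_m)$ and $\gamma_p(C_n\times C_m)\le\gamma_p(C_{n+1}\times C_m)$.
   Context: All graphs are finite, simple and undirected. $C_n$ denotes the cycle of order $n$ and $G\times H$ the Cartesian product of graphs. For a graph $G$ without isolated vertices: a set $D\subseteq V(G)$ is a total dominating set if every vertex of $G$ (including those in $D$) has a neighbour in $D$; $\gamma_t(G)$ is the minimum size of a total dominating set. A set $D\subseteq V(G)$ is a paired dominating set if every vertex outside $D$ has a neighbour in $D$ and the induced subgraph $G[D]$ has a perfect matching; $\gamma_p(G)$ is the minimum size of a paired dominating set. *)

theory Defs
  imports Main
begin

text \<open>A finite simple graph is given by a vertex set V and a symmetric,
irreflexive adjacency relation E (only its restriction to V matters).\<close>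

definition total_dominating_set :: "'a set \<Rightarrow> ('a \<Rightarrow> 'a \<Rightarrow> bool) \<Rightarrow> 'a set \<Rightarrow> bool" where
  "total_dominating_set V E D \<longleftrightarrow> D \<subseteq> V \<and> (\<forall>v\<in>V. \<exists>u\<in>D. E v u)"

definition has_perfect_matching :: "('a \<Rightarrow> 'a \<Rightarrow> bool) \<Rightarrow> 'a set \<Rightarrow> bool" where
  "has_perfect_matching E D \<longleftrightarrow>
     (\<exists>M. (\<forall>e\<in>M. \<exists>u v. e = {u, v} \<and> u \<noteq> v \<and> u \<in> D \<and> v \<in> D \<and> E u v) \<and>
          (\<forall>x\<in>D. \<exists>!e. e \<in> M \<and> x \<in> e))"

definition paired_dominating_set :: "'a set \<Rightarrow> ('a \<Rightarrow> 'a \<Rightarrow> bool) \<Rightarrow> 'a set \<Rightarrow> bool" where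
  "paired_dominating_set V E D \<longleftrightarrow> D \<subseteq> V \<and> (\<forall>v\<in>V - D. \<exists>u\<in>D. E v u) \<and> has_perfect_matching E D"

definition total_domination_number :: "'a set \<Rightarrow> ('a \<Rightarrow> 'a \<Rightarrow> bool) \<Rightarrow> nat" where
  "total_domination_number V E = (LEAST k. \<exists>D. total_dominating_set V E D \<and> card D = k)"

definition paired_domination_number :: "'a set \<Rightarrow> ('a \<Rightarrow> 'a \<Rightarrow> bool) \<Rightarrow> nat" where
  "paired_domination_number V E = (LEAST k. \<exists>D. paired_dominating_set V E D \<and> card D = k)"

definition cycle_adj :: "nat \<Rightarrow> nat \<Rightarrow> nat \<Rightarrow> bool" where
  "cycle_adj n i j \<longleftrightarrow> i < n \<and> j < n \<and> (j = (i + 1) mod n \<or> i = (j + 1) mod n)"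

definition torus_vertices :: "nat \<Rightarrow> nat \<Rightarrow> (nat \<times> nat) set" where
  "torus_vertices n m = {0..<n} \<times> {0..<m}"

definition torus_adj :: "nat \<Rightarrow> nat \<Rightarrow> nat \<times> nat \<Rightarrow> nat \<times> nat \<Rightarrow> bool" where
  "torus_adj n m p q \<longleftrightarrow>
     (fst p = fst q \<and> cycle_adj m (snd p) (snd q)) \<or> (snd p = snd q \<and> cycle_adj n (fst p) (fst q))"

end

theory Submission
  imports Defs
begin

text \<open>Collapsing the last column of \<open>C\<^sub>n\<^sub>+\<^sub>1 \<times> C\<^sub>m\<close> onto the one before it maps
\<open>C\<^sub>n\<^sub>+\<^sub>1 \<times> C\<^sub>m\<close> onto \<open>C\<^sub>n \<times> C\<^sub>m\<close> so that every edge goes to an edge or to a single vertex.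
No such map onto a graph without isolated vertices increases \<open>\<gamma>\<^sub>t\<close> or \<open>\<gamma>\<^sub>p\<close>.
The image of a total dominating set \<open>D\<close> becomes totally dominating once every vertex with
two preimages in \<open>D\<close> gets one extra neighbour, and these extras are paid for by the collisions.
For a paired dominating set, its \<open>|D|/2\<close> matching edges have images that are again edges
(a collapsed edge is replaced by any edge at its image); greedily, any \<open>k\<close> edges admit a paired
set of size at most \<open>2k\<close> dominating their closed neighbourhoods, and the closed neighbourhoods
of these image edges cover the whole target graph.\<close>

lemma has_perfect_matching_empty: "has_perfect_matching E {}"
  unfolding has_perfect_matching_def by auto

lemma has_perfect_matching_insert_edge:
  assumes "has_perfect_matching E D" "x \<notin> D" "y \<notin> D" "x \<noteq> y" "E x y"
  shows "has_perfect_matching E (insert x (insert y D))"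
proof -
  obtain M where edges: "\<forall>e\<in>M. \<exists>u v. e = {u, v} \<and> u \<noteq> v \<and> u \<in> D \<and> v \<in> D \<and> E u v"
    and unique: "\<forall>z\<in>D. \<exists>!e. e \<in> M \<and> z \<in> e"
    using assms(1) unfolding has_perfect_matching_def by blast
  have in_D: "e \<subseteq> D" if "e \<in> M" for e
    using edges that by fastforce
  have unique': "\<exists>!e. e \<in> insert {x, y} M \<and> z \<in> e" if "z \<in> insert x (insert y D)" for z
  proof (cases "z \<in> D")
    case True
    with unique have "\<exists>!e. e \<in> M \<and> z \<in> e" by blast
    then obtain e where "e \<in> M" "z \<in> e" "\<And>e'. e' \<in> M \<Longrightarrow> z \<in> e' \<Longrightarrow> e' = e"
      by (elim ex1E) blast
    moreover have "z \<noteq> x" "z \<noteq> y" using True assms(2,3) by auto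
    ultimately show ?thesis by (intro ex1I[of _ e]) blast+
  next
    case False
    with that in_D show ?thesis by (intro ex1I[of _ "{x, y}"]) blast+
  qed
  have edges': "\<exists>u v. e = {u, v} \<and> u \<noteq> v \<and>
      u \<in> insert x (insert y D) \<and> v \<in> insert x (insert y D) \<and> E u v"
    if "e \<in> insert {x, y} M" for e
  proof (cases "e \<in> M")
    case True
    obtain u v where "e = {u, v}" "u \<noteq> v" "u \<in> D" "v \<in> D" "E u v"
      using bspec[OF edges True] by (elim exE conjE)
    then show ?thesis by (intro exI[of _ u] exI[of _ v]) simp
  next
    case False
    with that have "e = {x, y}" by simp
    with assms(4,5) show ?thesis by (intro exI[of _ x] exI[of _ y]) simp
  qed
  show ?thesis
    unfolding has_perfect_matching_def
    by (intro exI[of _ "insert {x, y} M"] conjI ballI) (fact edges' unique')+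
qed

definition dominated :: "('a \<Rightarrow> 'a \<Rightarrow> bool) \<Rightarrow> 'a set \<Rightarrow> 'a \<Rightarrow> bool" where
  "dominated E D v \<longleftrightarrow> v \<in> D \<or> (\<exists>u\<in>D. E v u)"

lemma dominated_mono: "dominated E D v \<Longrightarrow> D \<subseteq> D' \<Longrightarrow> dominated E D' v"
  unfolding dominated_def by auto

abbreviation near_edge :: "('a \<Rightarrow> 'a \<Rightarrow> bool) \<Rightarrow> 'a \<Rightarrow> 'a \<Rightarrow> 'a \<Rightarrow> bool" where
  "near_edge E x y v \<equiv> v = x \<or> v = y \<or> E v x \<or> E v y"

lemma paired_extension_at_end:
  assumes sym: "\<And>u v. E u v \<Longrightarrow> E v u"
    and "x \<in> D" "y \<in> V" "E x y"
    and D: "D \<subseteq> V" "finite D" "has_perfect_matching E D"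
  shows "\<exists>D'. D \<subseteq> D' \<and> D' \<subseteq> V \<and> finite D' \<and> has_perfect_matching E D' \<and>
    card D' \<le> card D + 2 \<and> (\<forall>v\<in>V. near_edge E x y v \<longrightarrow> dominated E D' v)"
proof (cases "y \<notin> D \<and> (\<exists>z\<in>V - D. z \<noteq> y \<and> E y z)")
  case True
  then obtain z where z: "z \<in> V" "z \<notin> D" "z \<noteq> y" "E y z" by blast
  let ?D' = "insert y (insert z D)"
  have "has_perfect_matching E ?D'"
    using has_perfect_matching_insert_edge[OF D(3)] True z by blast
  moreover have "card ?D' \<le> card D + 2"
    using D(2) by (simp add: card_insert_if)
  moreover have "\<forall>v\<in>V. near_edge E x y v \<longrightarrow> dominated E ?D' v"
    using \<open>x \<in> D\<close> unfolding dominated_def by blast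
  ultimately show ?thesis
    using D \<open>y \<in> V\<close> z by (intro exI[of _ ?D']) auto
next
  case False
  have "dominated E D v" if "v \<in> V" "near_edge E x y v" for v
  proof -
    have "v \<in> D" if "v \<noteq> y" "E v y" "y \<notin> D"
      using False sym[OF \<open>E v y\<close>] \<open>v \<in> V\<close> that(1,3) by blast
    then show ?thesis
      using \<open>near_edge E x y v\<close> \<open>x \<in> D\<close> sym[OF \<open>E x y\<close>] unfolding dominated_def by blast
  qed
  then show ?thesis using D by (intro exI[of _ D]) auto
qed

lemma paired_extension_edge:
  assumes sym: "\<And>u v. E u v \<Longrightarrow> E v u"
    and xy: "x \<in> V" "y \<in> V" "E x y" "x \<noteq> y"
    and D: "D \<subseteq> V" "finite D" "has_perfect_matching E D"
  shows "\<exists>D'. D \<subseteq> D' \<and> D' \<subseteq> V \<and> finite D' \<and> has_perfect_matching E D' \<and>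
    card D' \<le> card D + 2 \<and> (\<forall>v\<in>V. near_edge E x y v \<longrightarrow> dominated E D' v)"
proof -
  consider "x \<in> D" | "y \<in> D" | "x \<notin> D" "y \<notin> D" by blast
  then show ?thesis
  proof cases
    case 1
    then show ?thesis using paired_extension_at_end[OF sym _ xy(2,3) D] by blast
  next
    case 2
    then show ?thesis using paired_extension_at_end[OF sym _ xy(1) sym[OF xy(3)] D] by blast
  next
    case 3
    let ?D' = "insert x (insert y D)"
    have "has_perfect_matching E ?D'"
      using has_perfect_matching_insert_edge[OF D(3) 3 xy(4,3)] .
    moreover have "card ?D' \<le> card D + 2"
      using D(2) by (simp add: card_insert_if)
    ultimately show ?thesis
      using D xy unfolding dominated_def by (intro exI[of _ ?D']) auto
  qed
qed

lemma paired_set_dominating_near_edges: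
  assumes "finite F" and sym: "\<And>u v. E u v \<Longrightarrow> E v u"
    and "\<forall>(x, y)\<in>F. x \<in> V \<and> y \<in> V \<and> E x y \<and> x \<noteq> y"
  shows "\<exists>D. D \<subseteq> V \<and> finite D \<and> has_perfect_matching E D \<and> card D \<le> 2 * card F \<and>
    (\<forall>(x, y)\<in>F. \<forall>v\<in>V. near_edge E x y v \<longrightarrow> dominated E D v)"
  using assms(1,3)
proof (induction F rule: finite_induct)
  case empty
  then show ?case using has_perfect_matching_empty by (intro exI[of _ "{}"]) auto
next
  case (insert p F)
  obtain x y where p: "p = (x, y)" by fastforce
  obtain D where D: "D \<subseteq> V" "finite D" "has_perfect_matching E D" "card D \<le> 2 * card F"
    "\<forall>(x, y)\<in>F. \<forall>v\<in>V. near_edge E x y v \<longrightarrow> dominated E D v"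
    using insert by auto
  have "x \<in> V" "y \<in> V" "E x y" "x \<noteq> y" using insert.prems p by auto
  from paired_extension_edge[OF sym this D(1-3)]
  obtain D' where D': "D \<subseteq> D'" "D' \<subseteq> V" "finite D'" "has_perfect_matching E D'"
    "card D' \<le> card D + 2" "\<forall>v\<in>V. near_edge E x y v \<longrightarrow> dominated E D' v"
    by blast
  have "\<forall>(x, y)\<in>F. \<forall>v\<in>V. near_edge E x y v \<longrightarrow> dominated E D' v"
    using D(5) dominated_mono[OF _ D'(1)] by fast
  moreover have "card D' \<le> 2 * card (insert p F)" using insert.hyps D(4) D'(5) by simp
  ultimately show ?case using D' p by (intro exI[of _ D']) auto
qed

lemma edges_of_perfect_matching:
  assumes "has_perfect_matching E D" "finite D"
  shows "\<exists>P. finite P \<and> 2 * card P \<le> card D \<and>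
    (\<forall>(x, y)\<in>P. x \<in> D \<and> y \<in> D \<and> E x y \<and> x \<noteq> y) \<and> (\<forall>z\<in>D. \<exists>(x, y)\<in>P. z = x \<or> z = y)"
proof -
  obtain M where edges: "\<forall>e\<in>M. \<exists>u v. e = {u, v} \<and> u \<noteq> v \<and> u \<in> D \<and> v \<in> D \<and> E u v"
    and unique: "\<forall>z\<in>D. \<exists>!e. e \<in> M \<and> z \<in> e"
    using assms(1) unfolding has_perfect_matching_def by blast
  obtain a b where ab: "\<forall>e\<in>M. e = {a e, b e} \<and> a e \<noteq> b e \<and> a e \<in> D \<and> b e \<in> D \<and> E (a e) (b e)"
    using bchoice[OF edges] by (metis (no_types, lifting))
  have in_D: "e \<subseteq> D" if "e \<in> M" for e
    using edges that by fastforce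
  have cover: "\<exists>e\<in>M. z \<in> e" if "z \<in> D" for z
    using unique that by (meson ex1E)
  have "finite M"
    using in_D assms(2) by (meson Pow_iff finite_Pow_iff finite_subset subsetI)
  have "pairwise disjnt M"
    unfolding pairwise_def disjnt_def
  proof (intro ballI impI)
    fix e e' assume "e \<in> M" "e' \<in> M" "e \<noteq> e'"
    then show "e \<inter> e' = {}" using unique in_D by blast
  qed
  moreover have "\<Union>M = D" using in_D cover by blast
  ultimately have "card D = (\<Sum>e\<in>M. card e)"
    using card_Union_disjoint[of M] in_D assms(2) finite_subset by metis
  also have "\<dots> = (\<Sum>e\<in>M. 2)"
  proof (rule sum.cong)
    show "card e = 2" if "e \<in> M" for e
      using edges that unfolding card_2_iff by blast
  qed simp
  also have "\<dots> = 2 * card M" by simp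
  finally have "2 * card ((\<lambda>e. (a e, b e)) ` M) \<le> card D"
    using card_image_le[OF \<open>finite M\<close>, of "\<lambda>e. (a e, b e)"] by linarith
  moreover have "\<forall>z\<in>D. \<exists>(x, y)\<in>(\<lambda>e. (a e, b e)) ` M. z = x \<or> z = y"
    using cover ab by fastforce
  ultimately show ?thesis using \<open>finite M\<close> ab by (intro exI[of _ "(\<lambda>e. (a e, b e)) ` M"]) auto
qed

lemma Least_card_mono:
  assumes "\<exists>D. P D"
    and "\<And>D. P D \<Longrightarrow> \<exists>D'. Q D' \<and> card D' \<le> card D"
  shows "(LEAST k. \<exists>D. Q D \<and> card D = k) \<le> (LEAST k. \<exists>D. P D \<and> card D = k)"
proof -
  obtain D where "P D" "card D = (LEAST k. \<exists>D. P D \<and> card D = k)"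
    using LeastI_ex[of "\<lambda>k. \<exists>D. P D \<and> card D = k"] assms(1) by blast
  moreover obtain D' where "Q D'" "card D' \<le> card D" using assms(2)[OF \<open>P D\<close>] by blast
  moreover have "(LEAST k. \<exists>D. Q D \<and> card D = k) \<le> card D'"
    using \<open>Q D'\<close> by (blast intro: Least_le)
  ultimately show ?thesis by linarith
qed

lemma card_image_plus_card_collisions:
  assumes "finite D"
  shows "card (f ` D) + card {c \<in> f ` D. \<exists>x\<in>D. \<exists>y\<in>D. x \<noteq> y \<and> f x = c \<and> f y = c} \<le> card D"
    (is "_ + card ?C \<le> _")
proof -
  have fibre: "1 + of_bool (c \<in> ?C) \<le> card {x \<in> D. f x = c}" if "c \<in> f ` D" for c
  proof (cases "c \<in> ?C")
    case True
    then obtain x y where "x \<in> D" "y \<in> D" "x \<noteq> y" "f x = c" "f y = c" by blast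
    then have "card {x, y} \<le> card {x \<in> D. f x = c}"
      by (intro card_mono) (auto simp: assms)
    with \<open>x \<noteq> y\<close> True show ?thesis by simp
  next
    case False
    from that assms have "card {x \<in> D. f x = c} > 0" by (auto simp: card_gt_0_iff)
    with False show ?thesis by auto
  qed
  have "card (f ` D) + card ?C = (\<Sum>c\<in>f ` D. 1 + of_bool (c \<in> ?C))"
    unfolding sum.distrib using assms by (simp add: Collect_conj_eq)
  also have "\<dots> \<le> (\<Sum>c\<in>f ` D. card {x \<in> D. f x = c})"
    by (rule sum_mono) (rule fibre)
  also have "\<dots> = card D"
    using sum.image_gen[OF assms, of "\<lambda>_. 1::nat" f] by simp
  finally show ?thesis .
qed

definition weak_hom_onto ::
    "'a set \<Rightarrow> ('a \<Rightarrow> 'a \<Rightarrow> bool) \<Rightarrow> 'b set \<Rightarrow> ('b \<Rightarrow> 'b \<Rightarrow> bool) \<Rightarrow> ('a \<Rightarrow> 'b) \<Rightarrow> bool" where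
  "weak_hom_onto V E V' E' f \<longleftrightarrow>
     f ` V = V' \<and> (\<forall>x\<in>V. \<forall>y\<in>V. E x y \<longrightarrow> f x = f y \<or> E' (f x) (f y))"

lemma total_dominating_set_weak_hom_image:
  assumes f: "weak_hom_onto V E V' E' f" and "finite V" and irrefl: "\<forall>x\<in>V. \<not> E x x"
    and nbr: "\<forall>v\<in>V'. \<exists>w\<in>V'. E' v w"
    and D: "total_dominating_set V E D"
  shows "\<exists>D'. total_dominating_set V' E' D' \<and> card D' \<le> card D"
proof -
  obtain w where w: "\<forall>v\<in>V'. w v \<in> V' \<and> E' v (w v)" using nbr by metis
  have DV: "D \<subseteq> V" and Ddom: "\<forall>v\<in>V. \<exists>u\<in>D. E v u"
    using D unfolding total_dominating_set_def by auto
  have "finite D" using DV \<open>finite V\<close> finite_subset by blast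
  have fV: "f ` V = V'" and adj: "\<And>x y. x \<in> V \<Longrightarrow> y \<in> V \<Longrightarrow> E x y \<Longrightarrow> f x = f y \<or> E' (f x) (f y)"
    using f unfolding weak_hom_onto_def by auto
  define C where "C = {c \<in> f ` D. \<exists>x\<in>D. \<exists>y\<in>D. x \<noteq> y \<and> f x = c \<and> f y = c}"
  define D' where "D' = f ` D \<union> w ` C"
  have "finite C" unfolding C_def using \<open>finite D\<close> by simp
  have "card D' \<le> card (f ` D) + card C"
    unfolding D'_def using card_Un_le[of "f ` D" "w ` C"] card_image_le[OF \<open>finite C\<close>, of w]
    by linarith
  also have "\<dots> \<le> card D"
    unfolding C_def by (rule card_image_plus_card_collisions[OF \<open>finite D\<close>])
  finally have "card D' \<le> card D" .
  moreover have "D' \<subseteq> V'" using DV fV w unfolding D'_def C_def by auto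
  moreover have "\<exists>u\<in>D'. E' v' u" if "v' \<in> V'" for v'
  proof -
    obtain v where v: "v \<in> V" "f v = v'" using fV \<open>v' \<in> V'\<close> by blast
    then obtain u where u: "u \<in> D" "E v u" using Ddom by blast
    show ?thesis
    proof (cases "f u = v'")
      case False
      then show ?thesis using adj[OF v(1) _ u(2)] u DV v unfolding D'_def by auto
    next
      case True
      obtain u' where u': "u' \<in> D" "E u u'" using Ddom u DV by blast
      then have "u' \<noteq> u" using irrefl u DV by blast
      show ?thesis
      proof (cases "f u' = v'")
        case False
        then show ?thesis using adj[OF _ _ u'(2)] u u' DV True unfolding D'_def by auto
      next
        case True
        then have "v' \<in> C" using \<open>f u = v'\<close> u u' \<open>u' \<noteq> u\<close> unfolding C_def by blast
        then show ?thesis using w \<open>v' \<in> V'\<close> unfolding D'_def by blast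
      qed
    qed
  qed
  ultimately show ?thesis unfolding total_dominating_set_def by blast
qed

lemma paired_dominating_set_weak_hom_image:
  assumes f: "weak_hom_onto V E V' E' f" and "finite V" and sym: "\<And>u v. E' u v \<Longrightarrow> E' v u"
    and nbr: "\<forall>v\<in>V'. \<exists>w\<in>V'. E' v w \<and> w \<noteq> v"
    and D: "paired_dominating_set V E D"
  shows "\<exists>D'. paired_dominating_set V' E' D' \<and> card D' \<le> card D"
proof -
  obtain w where w: "\<forall>v\<in>V'. w v \<in> V' \<and> E' v (w v) \<and> w v \<noteq> v" using nbr by metis
  have DV: "D \<subseteq> V" and Ddom: "\<forall>v\<in>V - D. \<exists>u\<in>D. E v u" and "has_perfect_matching E D"
    using D unfolding paired_dominating_set_def by auto
  have "finite D" using DV \<open>finite V\<close> finite_subset by blast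
  have fV: "f ` V = V'" and adj: "\<And>x y. x \<in> V \<Longrightarrow> y \<in> V \<Longrightarrow> E x y \<Longrightarrow> f x = f y \<or> E' (f x) (f y)"
    using f unfolding weak_hom_onto_def by auto
  obtain P where "finite P" "2 * card P \<le> card D"
    and P: "\<forall>(x, y)\<in>P. x \<in> D \<and> y \<in> D \<and> E x y \<and> x \<noteq> y" and cover: "\<forall>z\<in>D. \<exists>(x, y)\<in>P. z = x \<or> z = y"
    using edges_of_perfect_matching[OF \<open>has_perfect_matching E D\<close> \<open>finite D\<close>] by blast
  define g where "g x y = (if f x = f y then (f x, w (f x)) else (f x, f y))" for x y
  define F where "F = (\<lambda>(x, y). g x y) ` P"
  have "finite F" "card F \<le> card P"
    unfolding F_def using \<open>finite P\<close> card_image_le by auto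
  have g_edge: "fst (g x y) \<in> V' \<and> snd (g x y) \<in> V' \<and> E' (fst (g x y)) (snd (g x y)) \<and> fst (g x y) \<noteq> snd (g x y)"
    if "(x, y) \<in> P" for x y
  proof -
    have "x \<in> V" "y \<in> V" "E x y" using P that DV by auto
    then have "f x \<in> V'" "f y \<in> V'" "f x = f y \<or> E' (f x) (f y)" using fV adj by auto
    moreover have "w (f x) \<in> V'" "E' (f x) (w (f x))" "w (f x) \<noteq> f x" using w \<open>f x \<in> V'\<close> by auto
    ultimately show ?thesis unfolding g_def by auto
  qed
  have "\<forall>(a, b)\<in>F. a \<in> V' \<and> b \<in> V' \<and> E' a b \<and> a \<noteq> b"
  proof clarify
    fix a b assume "(a, b) \<in> F"
    then obtain x y where "(x, y) \<in> P" "g x y = (a, b)" unfolding F_def by auto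
    then show "a \<in> V' \<and> b \<in> V' \<and> E' a b \<and> a \<noteq> b" using g_edge[of x y] by simp
  qed
  from paired_set_dominating_near_edges[OF \<open>finite F\<close> sym this]
  obtain D' where D': "D' \<subseteq> V'" "finite D'" "has_perfect_matching E' D'" "card D' \<le> 2 * card F"
    and near: "\<forall>(a, b)\<in>F. \<forall>v\<in>V'. near_edge E' a b v \<longrightarrow> dominated E' D' v"
    by blast
  have near_image: "dominated E' D' v'" if "v' \<in> V'" "z \<in> D" "v' = f z \<or> E' v' (f z)" for v' z
  proof -
    obtain x y where "(x, y) \<in> P" "z = x \<or> z = y" using cover \<open>z \<in> D\<close> by blast
    moreover have "g x y \<in> F" using \<open>(x, y) \<in> P\<close> unfolding F_def by force
    moreover have "f z = fst (g x y) \<or> f z = snd (g x y)" using \<open>z = x \<or> z = y\<close> unfolding g_def by auto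
    ultimately show ?thesis using near that(1,3) by (cases "g x y") fastforce
  qed
  have "dominated E' D' v'" if "v' \<in> V'" for v'
  proof -
    obtain v where v: "v \<in> V" "f v = v'" using fV \<open>v' \<in> V'\<close> by blast
    show ?thesis
    proof (cases "v \<in> D")
      case True
      then show ?thesis using near_image[OF \<open>v' \<in> V'\<close>] v by blast
    next
      case False
      then obtain u where "u \<in> D" "E v u" using Ddom v by blast
      then show ?thesis using near_image[OF \<open>v' \<in> V'\<close> \<open>u \<in> D\<close>] adj[OF v(1)] v DV by blast
    qed
  qed
  then have "\<forall>v\<in>V' - D'. \<exists>u\<in>D'. E' v u" unfolding dominated_def by blast
  moreover have "card D' \<le> card D" using D'(4) \<open>card F \<le> card P\<close> \<open>2 * card P \<le> card D\<close> by linarith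
  ultimately show ?thesis using D' unfolding paired_dominating_set_def by blast
qed

lemma paired_dominating_set_exists:
  assumes "finite V" and sym: "\<And>u v. E u v \<Longrightarrow> E v u" and nbr: "\<forall>v\<in>V. \<exists>w\<in>V. E v w \<and> w \<noteq> v"
  shows "\<exists>D. paired_dominating_set V E D"
proof -
  obtain w where w: "\<forall>v\<in>V. w v \<in> V \<and> E v (w v) \<and> w v \<noteq> v" using nbr by metis
  let ?F = "(\<lambda>v. (v, w v)) ` V"
  obtain D where "D \<subseteq> V" "has_perfect_matching E D"
    and near: "\<forall>(x, y)\<in>?F. \<forall>v\<in>V. near_edge E x y v \<longrightarrow> dominated E D v"
    using paired_set_dominating_near_edges[of ?F E V] \<open>finite V\<close> sym w by fastforce
  moreover have "\<forall>v\<in>V - D. \<exists>u\<in>D. E v u" using near unfolding dominated_def by blast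
  ultimately show ?thesis unfolding paired_dominating_set_def by blast
qed

lemma cycle_adj_iff:
  "cycle_adj k i j \<longleftrightarrow> i < k \<and> j < k \<and>
     (j = (if i + 1 = k then 0 else i + 1) \<or> i = (if j + 1 = k then 0 else j + 1))"
  unfolding cycle_adj_def by (auto simp: mod_if)

lemma torus_adj_sym: "torus_adj n m x y \<Longrightarrow> torus_adj n m y x"
  unfolding torus_adj_def cycle_adj_def by auto

lemma torus_adj_irrefl: "n \<noteq> 1 \<Longrightarrow> m \<noteq> 1 \<Longrightarrow> \<not> torus_adj n m x x"
  unfolding torus_adj_def cycle_adj_iff by auto

lemma finite_torus_vertices: "finite (torus_vertices n m)"
  unfolding torus_vertices_def by simp

lemma torus_vertex_has_neighbour:
  assumes "m \<ge> 2" "v \<in> torus_vertices n m"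
  shows "\<exists>w\<in>torus_vertices n m. torus_adj n m v w \<and> w \<noteq> v"
proof -
  obtain i j where v: "v = (i, j)" "i < n" "j < m" using assms(2) unfolding torus_vertices_def by auto
  have "(j + 1) mod m \<noteq> j" using assms(1) v(3) by (simp add: mod_if)
  moreover have "(i, (j + 1) mod m) \<in> torus_vertices n m" using v assms(1) by (simp add: torus_vertices_def)
  moreover have "torus_adj n m v (i, (j + 1) mod m)"
    using v assms(1) by (simp add: torus_adj_def cycle_adj_def)
  ultimately show ?thesis using v by blast
qed

definition fold_last_column :: "nat \<Rightarrow> nat \<times> nat \<Rightarrow> nat \<times> nat" where
  "fold_last_column n p = (if fst p = n then (n - 1, snd p) else p)"

lemma weak_hom_onto_fold_last_column:
  assumes "n \<ge> 1"
  shows "weak_hom_onto (torus_vertices (n + 1) m) (torus_adj (n + 1) m)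
           (torus_vertices n m) (torus_adj n m) (fold_last_column n)"
proof -
  have "fold_last_column n ` torus_vertices (n + 1) m = torus_vertices n m"
    using assms unfolding torus_vertices_def fold_last_column_def
    by (auto simp: image_iff less_Suc_eq)
  moreover have "fold_last_column n x = fold_last_column n y
      \<or> torus_adj n m (fold_last_column n x) (fold_last_column n y)" if "torus_adj (n + 1) m x y" for x y
    using assms that unfolding torus_adj_def cycle_adj_iff fold_last_column_def
    by (cases x; cases y; auto split: if_splits)
  ultimately show ?thesis unfolding weak_hom_onto_def by blast
qed

theorem lemma5p1:
  fixes n m :: nat
  assumes "n \<ge> 3" and "m \<ge> 3"
  shows "total_domination_number (torus_vertices n m) (torus_adj n m)
           \<le> total_domination_number (torus_vertices (n + 1) m) (torus_adj (n + 1) m)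
       \<and> paired_domination_number (torus_vertices n m) (torus_adj n m)
           \<le> paired_domination_number (torus_vertices (n + 1) m) (torus_adj (n + 1) m)"
proof
  let ?V = "torus_vertices (n + 1) m" and ?E = "torus_adj (n + 1) m"
  have fold: "weak_hom_onto ?V ?E (torus_vertices n m) (torus_adj n m) (fold_last_column n)"
    using weak_hom_onto_fold_last_column assms by simp
  have nbr: "\<forall>v\<in>torus_vertices k m. \<exists>w\<in>torus_vertices k m. torus_adj k m v w \<and> w \<noteq> v" for k
    using torus_vertex_has_neighbour assms by simp
  have irrefl: "\<forall>x\<in>?V. \<not> ?E x x" using torus_adj_irrefl assms by simp
  have "total_dominating_set ?V ?E ?V" using nbr unfolding total_dominating_set_def by blast
  then show "total_domination_number (torus_vertices n m) (torus_adj n m)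
           \<le> total_domination_number ?V ?E"
    unfolding total_domination_number_def
    using total_dominating_set_weak_hom_image[OF fold finite_torus_vertices irrefl] nbr
    by (intro Least_card_mono) blast+
  show "paired_domination_number (torus_vertices n m) (torus_adj n m)
           \<le> paired_domination_number ?V ?E"
    unfolding paired_domination_number_def
    using paired_dominating_set_exists[OF finite_torus_vertices torus_adj_sym nbr]
      paired_dominating_set_weak_hom_image[OF fold finite_torus_vertices torus_adj_sym nbr]
    by (intro Least_card_mono) blast+
qed

end
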